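(* Let $R$ be a $K$-algebra with an ideal $J$ such that $J$ and $R/J$ are both locally unit-regular. Then $R$ is locally unit-regular if and only if for every idempotent $e \in R$, every unit of the unital algebra $eRe/eJe$ lifts to a unit of $eRe$ (i.e., is the image of a unit of $eRe$ under the quotient map $eRe \to eRe/eJe$).
   Context: $K$ is a field; algebras are associative, not necessarily unital; ideals are two-sided and $K$-subspaces. For an idempotent $e$, $eRe$ is a unital algebra with identity $e$, and $eJe$ is an ideal of it. A unital ring $S$ is unit-regular if for each $x\in S$ there is a unit $u$ of $S$ with $xux = x$. A $K$-algebra $R$ is locally unit-regular if every finite subset of $R$ is contained in a $K$-subalgebra of $R$ that has its own identity element and is unit-regular. *)

theory Defs
  imports Complex_Main
begin

text \<open>A (not necessarily unital, associative) algebra over a field 'k is modelled as a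
  type of class ring (non-unital ring) together with a scalar multiplication smult
  making it a 'k-vector space, compatible with the ring multiplication.\<close>

definition k_algebra :: "('k::field \<Rightarrow> 'a::ring \<Rightarrow> 'a) \<Rightarrow> bool" where
  "k_algebra smult \<longleftrightarrow> vector_space smult \<and>
     (\<forall>c a b. smult c (a * b) = smult c a * b \<and> smult c (a * b) = a * smult c b)"

definition subalgebra :: "('k::field \<Rightarrow> 'a::ring \<Rightarrow> 'a) \<Rightarrow> 'a set \<Rightarrow> bool" where
  "subalgebra smult S \<longleftrightarrow> module.subspace smult S \<and> (\<forall>x\<in>S. \<forall>y\<in>S. x * y \<in> S)"

definition alg_ideal :: "('k::field \<Rightarrow> 'a::ring \<Rightarrow> 'a) \<Rightarrow> 'a set \<Rightarrow> bool" where
  "alg_ideal smult J \<longleftrightarrow> module.subspace smult J \<and> (\<forall>r. \<forall>x\<in>J. r * x \<in> J \<and> x * r \<in> J)"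

definition is_identity :: "'a::ring set \<Rightarrow> 'a \<Rightarrow> bool" where
  "is_identity S e \<longleftrightarrow> e \<in> S \<and> (\<forall>x\<in>S. e * x = x \<and> x * e = x)"

definition is_unit_in :: "'a::ring set \<Rightarrow> 'a \<Rightarrow> 'a \<Rightarrow> bool" where
  "is_unit_in S e u \<longleftrightarrow> u \<in> S \<and> (\<exists>v\<in>S. u * v = e \<and> v * u = e)"

definition unit_regular_with_identity :: "'a::ring set \<Rightarrow> bool" where
  "unit_regular_with_identity S \<longleftrightarrow>
     (\<exists>e. is_identity S e \<and> (\<forall>x\<in>S. \<exists>u. is_unit_in S e u \<and> x * u * x = x))"

definition locally_unit_regular :: "('k::field \<Rightarrow> 'a::ring \<Rightarrow> 'a) \<Rightarrow> 'a set \<Rightarrow> bool" where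
  "locally_unit_regular smult A \<longleftrightarrow>
     (\<forall>F. finite F \<and> F \<subseteq> A \<longrightarrow>
        (\<exists>S. subalgebra smult S \<and> S \<subseteq> A \<and> F \<subseteq> S \<and> unit_regular_with_identity S))"

definition corner :: "'a::ring \<Rightarrow> 'a set \<Rightarrow> 'a set" where
  "corner e A = (\<lambda>a. e * a * e) ` A"

text \<open>p is a surjective K-algebra homomorphism onto Q with kernel J, i.e. Q is (a copy of) R/J.\<close>
definition quotient_map :: "('k::field \<Rightarrow> 'a::ring \<Rightarrow> 'a) \<Rightarrow> ('k \<Rightarrow> 'q::ring \<Rightarrow> 'q)
    \<Rightarrow> ('a \<Rightarrow> 'q) \<Rightarrow> 'a set \<Rightarrow> bool" where
  "quotient_map smult smultQ p J \<longleftrightarrow>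
     (\<forall>x y. p (x + y) = p x + p y) \<and> (\<forall>x y. p (x * y) = p x * p y) \<and>
     (\<forall>c x. p (smult c x) = smultQ c (p x)) \<and> surj p \<and> {x. p x = 0} = J"

end

theory Submission
  imports Defs
begin

text \<open>
  Regularity passes from J and R/J to R, and a regular algebra has local units: every finite
  subset lies in a corner gRg with g idempotent.  It therefore suffices to show that such a
  corner is unit-regular.  Given a \<in> gRg, unit-regularity of R/J yields a unit U of the
  corner with (p a) U (p a) = p a; lifting U to a unit u of gRg (the hypothesis) makes
  b = a u idempotent modulo J.  Lift p b to an idempotent f of gRg.  Inside J one finds an
  idempotent h commuting with f that absorbs b - f on both sides; then b splits as the
  idempotent f - h f plus the element h b h of the unit-regular corner hJh, and a unit
  inverse of h b h in hJh extends by g - h to a unit inverse of b in gRg.  Conversely, in a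
  locally unit-regular R a unit-regular inner inverse of x \<in> eRe is automatically inverse
  to x modulo eJe whenever x is invertible there, and its inverse is the required lift.
\<close>

text \<open>Simplifying with \<open>left_assoc_ring_simps\<close> brings products into left-associated
  form; the two rules below let an equation a * b = c rewrite inside such a product.\<close>

lemmas left_assoc_ring_simps = ring_distribs mult.assoc[symmetric]

lemma left_assoc_eq: "a * b = (c::'a::ring) \<Longrightarrow> z * a * b = z * c"
  by (simp add: mult.assoc)

lemma left_assoc_eq3: "a * b * c = (d::'a::ring) \<Longrightarrow> z * a * b * c = z * d"
  by (simp add: mult.assoc)

lemma idempotent_sandwich_iff:
  fixes e :: "'a::ring"
  assumes ee: "e * e = e"
  shows "e * z * e = z \<longleftrightarrow> e * z = z \<and> z * e = z"
proof
  assume ez: "e * z * e = z"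
  show "e * z = z \<and> z * e = z" using ee ez by (metis mult.assoc)
qed simp

section \<open>Subrings, regularity and equivalence of idempotents\<close>

definition subrng :: "'a::ring set \<Rightarrow> bool" where
  "subrng S \<longleftrightarrow> 0 \<in> S \<and> (\<forall>x\<in>S. \<forall>y\<in>S. x + y \<in> S \<and> x - y \<in> S \<and> x * y \<in> S)"

lemma subrng_zero: "subrng S \<Longrightarrow> 0 \<in> S"
  and subrng_add: "subrng S \<Longrightarrow> x \<in> S \<Longrightarrow> y \<in> S \<Longrightarrow> x + y \<in> S"
  and subrng_diff: "subrng S \<Longrightarrow> x \<in> S \<Longrightarrow> y \<in> S \<Longrightarrow> x - y \<in> S"
  and subrng_mult: "subrng S \<Longrightarrow> x \<in> S \<Longrightarrow> y \<in> S \<Longrightarrow> x * y \<in> S"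
  by (auto simp: subrng_def)

lemma subrng_UNIV: "subrng UNIV"
  by (simp add: subrng_def)

definition regular :: "'a::ring set \<Rightarrow> bool" where
  "regular A \<longleftrightarrow> (\<forall>x\<in>A. \<exists>c\<in>A. x * c * x = x)"

definition unit_regular :: "'a::ring set \<Rightarrow> 'a \<Rightarrow> bool" where
  "unit_regular S g \<longleftrightarrow> (\<forall>x\<in>S. \<exists>u. is_unit_in S g u \<and> x * u * x = x)"

lemma unit_regular_with_identity_iff:
  "unit_regular_with_identity S \<longleftrightarrow> (\<exists>g. is_identity S g \<and> unit_regular S g)"
  unfolding unit_regular_with_identity_def unit_regular_def by auto

lemma is_unit_in_mono: "S \<subseteq> T \<Longrightarrow> is_unit_in S e u \<Longrightarrow> is_unit_in T e u"
  unfolding is_unit_in_def by blast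

lemma is_unit_in_mult:
  assumes S: "subrng S" and g: "is_identity S g"
    and u: "is_unit_in S g u" and w: "is_unit_in S g w"
  shows "is_unit_in S g (u * w)"
proof -
  obtain u' where u': "u \<in> S" "u' \<in> S" "u * u' = g" "u' * u = g" using u unfolding is_unit_in_def by blast
  obtain w' where w': "w \<in> S" "w' \<in> S" "w * w' = g" "w' * w = g" using w unfolding is_unit_in_def by blast
  have "u * w * (w' * u') = u * g * u'" "w' * u' * (u * w) = w' * g * w"
    using u' w' by (simp_all add: mult.assoc[symmetric]) (simp_all add: mult.assoc)
  then have "u * w * (w' * u') = g" "w' * u' * (u * w) = g"
    using u' w' g unfolding is_identity_def by simp_all
  then show ?thesis unfolding is_unit_in_def using S u' w' by (blast intro: subrng_mult)
qed

definition mvn_equiv :: "'a::ring set \<Rightarrow> 'a \<Rightarrow> 'a \<Rightarrow> bool" where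
  "mvn_equiv S e f \<longleftrightarrow> (\<exists>x\<in>S. \<exists>y\<in>S.
     x * y = e \<and> y * x = f \<and> e * x = x \<and> x * f = x \<and> f * y = y \<and> y * e = y)"

lemma mvn_equivI:
  "x \<in> S \<Longrightarrow> y \<in> S \<Longrightarrow> x * y = e \<Longrightarrow> y * x = f \<Longrightarrow> e * x = x \<Longrightarrow> x * f = x \<Longrightarrow>
    f * y = y \<Longrightarrow> y * e = y \<Longrightarrow> mvn_equiv S e f"
  unfolding mvn_equiv_def by blast

lemma mvn_equivE:
  assumes "mvn_equiv S e f"
  obtains x y where "x \<in> S" "y \<in> S" "x * y = e" "y * x = f"
    "e * x = x" "x * f = x" "f * y = y" "y * e = y"
  using assms unfolding mvn_equiv_def by blast

lemma mvn_equiv_sym: "mvn_equiv S e f \<Longrightarrow> mvn_equiv S f e"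
  unfolding mvn_equiv_def by blast

lemma mvn_equiv_trans:
  assumes S: "subrng S" and "mvn_equiv S e f" and "mvn_equiv S f h"
  shows "mvn_equiv S e h"
proof -
  obtain x1 y1 where a: "x1 \<in> S" "y1 \<in> S" "x1 * y1 = e" "y1 * x1 = f"
    "e * x1 = x1" "x1 * f = x1" "f * y1 = y1" "y1 * e = y1"
    using assms(2) by (rule mvn_equivE)
  obtain x2 y2 where b: "x2 \<in> S" "y2 \<in> S" "x2 * y2 = f" "y2 * x2 = h"
    "f * x2 = x2" "x2 * h = x2" "h * y2 = y2" "y2 * f = y2"
    using assms(3) by (rule mvn_equivE)
  show ?thesis
  proof (rule mvn_equivI[of "x1 * x2" _ "y2 * y1"])
    show "x1 * x2 * (y2 * y1) = e" using a b left_assoc_eq[OF b(3)] by (simp add: left_assoc_ring_simps)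
    show "y2 * y1 * (x1 * x2) = h" using a b left_assoc_eq[OF a(4)] by (simp add: left_assoc_ring_simps)
    show "e * (x1 * x2) = x1 * x2" using a by (simp add: left_assoc_ring_simps)
    show "x1 * x2 * h = x1 * x2" using b by (simp add: mult.assoc)
    show "h * (y2 * y1) = y2 * y1" using b by (simp add: left_assoc_ring_simps)
    show "y2 * y1 * e = y2 * y1" using a by (simp add: mult.assoc)
  qed (use a b S in \<open>auto intro: subrng_mult\<close>)
qed

lemma mvn_equiv_complements_same_right_ideal:
  assumes S: "subrng S" and g: "is_identity S g" and "a \<in> S" "b \<in> S"
    and ab: "a * b = b" and ba: "b * a = a"
  shows "mvn_equiv S (g - a) (g - b)"
proof -
  have gab: "g * a = a" "a * g = a" "g * b = b" "b * g = b" "g * g = g"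
    using g assms(3,4) unfolding is_identity_def by auto
  have idem: "a * a = a" "b * b = b" using ab ba by (metis mult.assoc)+
  show ?thesis
    by (rule mvn_equivI[of "g - a" _ "g - b"])
      (use S g assms(3,4) gab idem ab ba in \<open>auto simp: algebra_simps is_identity_def intro: subrng_diff\<close>)
qed

lemma mvn_equiv_complements_same_left_ideal:
  assumes S: "subrng S" and g: "is_identity S g" and "a \<in> S" "b \<in> S"
    and ab: "a * b = a" and ba: "b * a = b"
  shows "mvn_equiv S (g - a) (g - b)"
proof -
  have gab: "g * a = a" "a * g = a" "g * b = b" "b * g = b" "g * g = g"
    using g assms(3,4) unfolding is_identity_def by auto
  have idem: "a * a = a" "b * b = b" using ab ba by (metis mult.assoc)+
  show ?thesis
    by (rule mvn_equivI[of "g - b" _ "g - a"])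
      (use S g assms(3,4) gab idem ab ba in \<open>auto simp: algebra_simps is_identity_def intro: subrng_diff\<close>)
qed

lemma mvn_equiv_complements_unit:
  assumes S: "subrng S" and g: "is_identity S g" and x: "x \<in> S"
    and u: "is_unit_in S g u" and xux: "x * u * x = x"
  shows "mvn_equiv S (g - x * u) (g - u * x)"
proof -
  obtain v where v: "u \<in> S" "v \<in> S" "u * v = g" "v * u = g" using u unfolding is_unit_in_def by blast
  have gg: "g * x = x" "x * g = x" "g * u = u" "u * g = u" "g * v = v" "v * g = v" "g * g = g"
    using g x v unfolding is_identity_def by auto
  note eqs = gg left_assoc_eq[OF gg(2)] left_assoc_eq[OF gg(4)] left_assoc_eq[OF gg(6)]
    v(3,4) xux left_assoc_eq[OF v(3)] left_assoc_eq[OF v(4)] left_assoc_eq3[OF xux]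
  show ?thesis
    by (rule mvn_equivI[of "v - x" _ "u - u * x * u"])
      (use eqs S x v in \<open>simp_all add: left_assoc_ring_simps subrng_diff subrng_mult\<close>)
qed

text \<open>With a unit inner inverse u of x : p \<sim> q, the complements of p and q are equivalent
  to those of x u and u x, which are equivalent to each other via u.\<close>

lemma unit_regular_mvn_equiv_complements:
  assumes S: "subrng S" and g: "is_identity S g" and ur: "unit_regular S g"
    and pS: "p \<in> S" and qS: "q \<in> S" and pq: "mvn_equiv S p q"
  shows "mvn_equiv S (g - p) (g - q)"
proof -
  obtain x y where a: "x \<in> S" "y \<in> S" "x * y = p" "y * x = q"
    "p * x = x" "x * q = x" "q * y = y" "y * p = y"
    using pq by (rule mvn_equivE)
  obtain u where u: "is_unit_in S g u" "x * u * x = x" using ur a(1) unfolding unit_regular_def by blast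
  have xuS: "x * u \<in> S" "u * x \<in> S" using S a(1) u(1) by (auto simp: is_unit_in_def intro: subrng_mult)
  have "p * (x * u) = x * u" "x * u * p = p" using a(3,5) u(2) by (metis mult.assoc)+
  then have 1: "mvn_equiv S (g - p) (g - x * u)"
    by (rule mvn_equiv_complements_same_right_ideal[OF S g pS xuS(1)])
  have "q * (u * x) = q" "u * x * q = u * x" using a(4,6) u(2) by (metis mult.assoc)+
  then have 2: "mvn_equiv S (g - q) (g - u * x)"
    by (rule mvn_equiv_complements_same_left_ideal[OF S g qS xuS(2)])
  show ?thesis
    using mvn_equiv_trans[OF S 1 mvn_equiv_trans[OF S mvn_equiv_complements_unit[OF S g a(1) u]
          mvn_equiv_sym[OF 2]]] .
qed

text \<open>If s : e - a c \<sim> e - c a with reverse t, then c + t is a unit (with inverse a + s).\<close>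

lemma unit_inner_inverse_of_mvn_equiv_complements:
  assumes S: "subrng S" and e: "is_identity S e" and aS: "a \<in> S" and cS: "c \<in> S"
    and aca: "a * c * a = a" and cac: "c * a * c = c"
    and equiv: "mvn_equiv S (e - a * c) (e - c * a)"
  shows "\<exists>w. is_unit_in S e w \<and> a * w * a = a"
proof -
  obtain s t where st: "s \<in> S" "t \<in> S" "s * t = e - a * c" "t * s = e - c * a"
    "(e - a * c) * s = s" "s * (e - c * a) = s" "(e - c * a) * t = t" "t * (e - a * c) = t"
    using equiv by (rule mvn_equivE)
  have ea: "e * a = a" "a * e = a" "e * c = c" "c * e = c" using e aS cS unfolding is_identity_def by auto
  have "c * s = (c * e - c * a * c) * s" by (subst st(5)[symmetric]) (simp add: algebra_simps)
  then have cs: "c * s = 0" using ea cac by simp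
  have "t * a = t * (e * a - a * c * a)" by (subst st(8)[symmetric]) (simp add: algebra_simps)
  then have ta: "t * a = 0" using ea aca by simp
  have "a * t = (a * e - a * c * a) * t" by (subst st(7)[symmetric]) (simp add: algebra_simps)
  then have at: "a * t = 0" using ea aca by simp
  have "s * c = s * (e * c - c * a * c)" by (subst st(6)[symmetric]) (simp add: algebra_simps)
  then have sc: "s * c = 0" using ea cac by simp
  have "(c + t) * (a + s) = e" "(a + s) * (c + t) = e"
    using cs ta at sc st(3,4) by (simp_all add: algebra_simps)
  moreover have "a * (c + t) * a = a" using aca by (simp add: distrib_left distrib_right at)
  moreover have "c + t \<in> S" "a + s \<in> S" using S aS cS st(1,2) by (auto intro: subrng_add)
  ultimately show ?thesis unfolding is_unit_in_def by blast
qed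

section \<open>Corners\<close>

lemma corner_iff:
  assumes ee: "e * e = e" and sandwich: "\<And>x. x \<in> S \<Longrightarrow> e * x * e \<in> S"
  shows "z \<in> corner e S \<longleftrightarrow> z \<in> S \<and> e * z = z \<and> z * e = z"
proof
  assume "z \<in> corner e S"
  then obtain s where s: "s \<in> S" "z = e * s * e" unfolding corner_def by blast
  then have "e * z * e = z" using ee by (simp add: mult.assoc[symmetric]) (simp add: mult.assoc)
  then show "z \<in> S \<and> e * z = z \<and> z * e = z"
    using s sandwich idempotent_sandwich_iff[OF ee] by auto
next
  assume "z \<in> S \<and> e * z = z \<and> z * e = z"
  then show "z \<in> corner e S" unfolding corner_def by (metis image_eqI)
qed

lemma subrng_sandwich: "subrng S \<Longrightarrow> e \<in> S \<Longrightarrow> x \<in> S \<Longrightarrow> e * x * e \<in> S"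
  by (blast intro: subrng_mult)

lemma alg_ideal_mult: "alg_ideal smult J \<Longrightarrow> x \<in> J \<Longrightarrow> r * x \<in> J"
  "alg_ideal smult J \<Longrightarrow> x \<in> J \<Longrightarrow> x * r \<in> J"
  unfolding alg_ideal_def by auto

lemma alg_ideal_sandwich: "alg_ideal smult J \<Longrightarrow> x \<in> J \<Longrightarrow> e * x * e \<in> J"
  by (blast intro: alg_ideal_mult)

lemma corner_UNIV_iff: "e * e = e \<Longrightarrow> z \<in> corner e UNIV \<longleftrightarrow> e * z = z \<and> z * e = z"
  using corner_iff[of e UNIV] by simp

lemma corner_ideal_iff:
  "alg_ideal smult J \<Longrightarrow> e * e = e \<Longrightarrow> z \<in> corner e J \<longleftrightarrow> z \<in> J \<and> e * z = z \<and> z * e = z"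
  using corner_iff alg_ideal_sandwich by metis

lemma corner_mono: "S \<subseteq> T \<Longrightarrow> corner e S \<subseteq> corner e T"
  unfolding corner_def by blast

lemma subrng_corner:
  assumes S: "subrng S" and ee: "e * e = e" and sandwich: "\<And>x. x \<in> S \<Longrightarrow> e * x * e \<in> S"
  shows "subrng (corner e S)"
proof -
  note mem = corner_iff[OF ee sandwich]
  show ?thesis unfolding subrng_def
  proof (intro conjI ballI)
    show "0 \<in> corner e S" using mem S by (simp add: subrng_zero)
    fix x y assume "x \<in> corner e S" "y \<in> corner e S"
    then have x: "x \<in> S" "e * x = x" "x * e = x" and y: "y \<in> S" "e * y = y" "y * e = y"
      using mem by auto
    have "e * (x * y) = x * y" "x * y * e = x * y"
      using x y by (simp_all add: mult.assoc[symmetric]) (simp add: mult.assoc)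
    then show "x * y \<in> corner e S" using mem x y S by (auto intro: subrng_mult)
    show "x + y \<in> corner e S" "x - y \<in> corner e S"
      using x y S mem by (auto simp: algebra_simps intro: subrng_add subrng_diff)
  qed
qed

lemma is_identity_corner:
  assumes ee: "e * e = e" and eS: "e \<in> S"
  shows "is_identity (corner e S) e"
proof -
  have "e = e * e * e" using ee by simp
  then have "e \<in> corner e S" unfolding corner_def using eS by blast
  then show ?thesis
    unfolding is_identity_def corner_def using ee by (auto simp: mult.assoc[symmetric]) (simp add: mult.assoc)
qed

lemma mvn_equiv_corner:
  assumes ee: "e * e = e" and sandwich: "\<And>x. x \<in> S \<Longrightarrow> e * x * e \<in> S"
    and equiv: "mvn_equiv S p q" and p: "p \<in> corner e S" and q: "q \<in> corner e S"
  shows "mvn_equiv (corner e S) p q"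
proof -
  note mem = corner_iff[OF ee sandwich]
  obtain x y where xy: "x \<in> S" "y \<in> S" "x * y = p" "y * x = q"
    "p * x = x" "x * q = x" "q * y = y" "y * p = y"
    using equiv by (rule mvn_equivE)
  have ep: "e * p = p" "q * e = q" "e * q = q" "p * e = p" using p q mem by auto
  have "e * x = x" "x * e = x" "e * y = y" "y * e = y"
    using xy ep by (metis mult.assoc)+
  then have "x \<in> corner e S" "y \<in> corner e S" using mem xy by auto
  then show ?thesis using xy by (blast intro: mvn_equivI)
qed

lemma reflexive_inner_inverse_in_corner:
  assumes S: "subrng S" and eS: "e \<in> S" and ee: "e * e = e" and a: "a \<in> corner e S"
    and u: "u \<in> S" "a * u * a = a"
  shows "\<exists>c\<in>corner e S. a * c * a = a \<and> c * a * c = c"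
proof -
  note mem = corner_iff[OF ee subrng_sandwich[OF S eS]]
  have ea: "e * a = a" "a * e = a" using mem a by auto
  define c0 where "c0 = e * u * e"
  have "a * c0 * a = a * e * u * (e * a)" unfolding c0_def by (simp add: mult.assoc)
  then have ac0a: "a * c0 * a = a" using ea u(2) by simp
  have "c0 * a * c0 \<in> S" unfolding c0_def using S eS u(1) a mem by (auto intro: subrng_mult)
  moreover have "e * (c0 * a * c0) = c0 * a * c0" "c0 * a * c0 * e = c0 * a * c0"
    unfolding c0_def using ee by (simp_all add: mult.assoc[symmetric]) (simp add: mult.assoc)
  moreover have "a * (c0 * a * c0) * a = a" "c0 * a * c0 * a * (c0 * a * c0) = c0 * a * c0"
    using ac0a by (metis mult.assoc)+
  ultimately show ?thesis using mem by blast
qed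

text \<open>For a = a c a in eSe, the idempotents a c + (g - e) and c a + (g - e) are equivalent
  in S; by unit-regularity of S so are their complements e - a c and e - c a.\<close>

lemma unit_regular_corner:
  assumes S: "subrng S" and g: "is_identity S g" and ur: "unit_regular S g"
    and eS: "e \<in> S" and ee: "e * e = e"
  shows "unit_regular (corner e S) e"
  unfolding unit_regular_def
proof
  fix a assume a_corner: "a \<in> corner e S"
  note sandwich = subrng_sandwich[OF S eS]
  note mem = corner_iff[OF ee sandwich]
  have a: "a \<in> S" "e * a = a" "a * e = a" using mem a_corner by auto
  obtain u where "is_unit_in S g u" "a * u * a = a" using ur a(1) unfolding unit_regular_def by blast
  then obtain c where c_corner: "c \<in> corner e S" and aca: "a * c * a = a" and cac: "c * a * c = c"
    using reflexive_inner_inverse_in_corner[OF S eS ee a_corner] unfolding is_unit_in_def by blast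
  have c: "c \<in> S" "e * c = c" "c * e = c" using mem c_corner by auto
  have gg: "g * a = a" "a * g = a" "g * c = c" "c * g = c" "g * e = e" "e * g = e" "g * g = g"
    using g a(1) c(1) eS unfolding is_identity_def by auto
  define G where "G = g - e"
  have GS: "G \<in> S" unfolding G_def using S g eS by (auto intro: subrng_diff simp: is_identity_def)
  have G: "a * G = 0" "G * a = 0" "c * G = 0" "G * c = 0" "G * G = G"
    unfolding G_def using gg c a ee by (simp_all add: algebra_simps)
  have "mvn_equiv S (a * c + G) (c * a + G)"
  proof (rule mvn_equivI[of "a + G" _ "c + G"])
    show "a + G \<in> S" "c + G \<in> S" using S a(1) c(1) GS by (auto intro: subrng_add)
  qed (use G aca cac left_assoc_eq[OF G(1)] left_assoc_eq[OF G(3)] left_assoc_eq3[OF aca]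
       left_assoc_eq3[OF cac] in \<open>simp_all add: distrib_left distrib_right mult.assoc[symmetric]\<close>)
  then have "mvn_equiv S (g - (a * c + G)) (g - (c * a + G))"
    using S a(1) c(1) GS by (intro unit_regular_mvn_equiv_complements[OF S g ur])
      (auto intro: subrng_add subrng_mult)
  then have "mvn_equiv S (e - a * c) (e - c * a)" unfolding G_def by simp
  moreover have "e - a * c \<in> corner e S" "e - c * a \<in> corner e S"
    using mem S eS a c ee by (auto simp: algebra_simps mult.assoc[symmetric] intro: subrng_diff subrng_mult)
  ultimately have "mvn_equiv (corner e S) (e - a * c) (e - c * a)"
    using mvn_equiv_corner[OF ee sandwich] by blast
  then show "\<exists>u. is_unit_in (corner e S) e u \<and> a * u * a = a"
    using unit_inner_inverse_of_mvn_equiv_complements[OF subrng_corner[OF S ee sandwich]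
        is_identity_corner[OF ee eS] a_corner c_corner aca cac] by blast
qed


section \<open>Algebras, ideals and quotient maps\<close>

lemma k_algebra_module: "k_algebra smult \<Longrightarrow> module smult"
  unfolding k_algebra_def using vector_space.vector_space_assms by (intro module.intro) blast+

lemma k_algebra_smult_mult:
  "k_algebra smult \<Longrightarrow> smult c (a * b) = smult c a * b"
  "k_algebra smult \<Longrightarrow> smult c (a * b) = a * smult c b"
  unfolding k_algebra_def by blast+

lemma subrng_of_subspace:
  assumes K: "k_algebra smult" and sub: "module.subspace smult S"
    and mult: "\<And>x y. x \<in> S \<Longrightarrow> y \<in> S \<Longrightarrow> x * y \<in> S"
  shows "subrng S"
proof -
  have M: "module smult" using K by (rule k_algebra_module)
  show ?thesis
    unfolding subrng_def
    using module.subspace_0[OF M sub] module.subspace_add[OF M sub] module.subspace_diff[OF M sub] mult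
    by simp
qed

lemma subalgebra_subrng: "k_algebra smult \<Longrightarrow> subalgebra smult S \<Longrightarrow> subrng S"
  unfolding subalgebra_def by (rule subrng_of_subspace) auto

lemma alg_ideal_subrng: "k_algebra smult \<Longrightarrow> alg_ideal smult J \<Longrightarrow> subrng J"
  unfolding alg_ideal_def by (rule subrng_of_subspace) auto

lemma subalgebra_corner:
  assumes K: "k_algebra smult" and S: "subalgebra smult S" and eS: "e \<in> S" and ee: "e * e = e"
  shows "subalgebra smult (corner e S)"
proof -
  have M: "module smult" using K by (rule k_algebra_module)
  have R: "subrng S" using subalgebra_subrng[OF K S] .
  have C: "subrng (corner e S)" using subrng_corner[OF R ee subrng_sandwich[OF R eS]] .
  have sub: "module.subspace smult S" using S unfolding subalgebra_def by auto
  have "module.subspace smult (corner e S)"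
    unfolding module.subspace_def[OF M]
  proof (intro conjI ballI allI)
    show "0 \<in> corner e S" using C by (rule subrng_zero)
    fix x y assume "x \<in> corner e S" "y \<in> corner e S"
    then show "x + y \<in> corner e S" by (rule subrng_add[OF C])
  next
    fix c x assume "x \<in> corner e S"
    then obtain s where s: "s \<in> S" "x = e * s * e" unfolding corner_def by blast
    have "smult c x = e * smult c s * e" using s k_algebra_smult_mult[OF K] by simp
    moreover have "smult c s \<in> S" using module.subspace_scale[OF M sub s(1)] .
    ultimately show "smult c x \<in> corner e S" unfolding corner_def by blast
  qed
  then show ?thesis unfolding subalgebra_def using C by (auto intro: subrng_mult)
qed

lemma subalgebra_UNIV: "k_algebra smult \<Longrightarrow> subalgebra smult UNIV"
  unfolding subalgebra_def using module.subspace_UNIV[OF k_algebra_module] by simp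

lemma locally_unit_regular_imp_regular: "locally_unit_regular smult A \<Longrightarrow> regular A"
  unfolding regular_def
proof
  fix x assume "locally_unit_regular smult A" "x \<in> A"
  then obtain S where "S \<subseteq> A" "x \<in> S" "unit_regular_with_identity S"
    unfolding locally_unit_regular_def by (metis empty_subsetI finite.emptyI finite_insert insert_subset)
  then show "\<exists>c\<in>A. x * c * x = x"
    unfolding unit_regular_with_identity_def is_unit_in_def by blast
qed

lemma locally_unit_regular_corner:
  assumes K: "k_algebra smult" and L: "locally_unit_regular smult A"
    and eA: "e \<in> A" and ee: "e * e = e" and sandwich: "\<And>x. x \<in> A \<Longrightarrow> e * x * e \<in> A"
  shows "unit_regular (corner e A) e"
  unfolding unit_regular_def
proof
  fix x assume "x \<in> corner e A"
  then have x: "x \<in> A" "e * x = x" "x * e = x" using corner_iff[OF ee sandwich] by auto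
  obtain S where S: "subalgebra smult S" "S \<subseteq> A" "{e, x} \<subseteq> S" "unit_regular_with_identity S"
    using L eA x(1) unfolding locally_unit_regular_def by (metis empty_subsetI finite.emptyI finite_insert insert_subset)
  have R: "subrng S" using subalgebra_subrng[OF K S(1)] .
  obtain g where g: "is_identity S g" "unit_regular S g" using S(4) unfolding unit_regular_with_identity_iff by blast
  have "x \<in> corner e S" using corner_iff[OF ee subrng_sandwich[OF R]] S(3) x by auto
  then obtain u where "is_unit_in (corner e S) e u" "x * u * x = x"
    using unit_regular_corner[OF R g] S(3) ee unfolding unit_regular_def by blast
  then show "\<exists>u. is_unit_in (corner e A) e u \<and> x * u * x = x"
    using is_unit_in_mono[OF corner_mono[OF S(2)]] by blast
qed

lemma quotient_map_add: "quotient_map smult smultQ p J \<Longrightarrow> p (x + y) = p x + p y"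
  and quotient_map_mult: "quotient_map smult smultQ p J \<Longrightarrow> p (x * y) = p x * p y"
  and quotient_map_surj: "quotient_map smult smultQ p J \<Longrightarrow> \<exists>x. p x = z"
  and quotient_map_kernel: "quotient_map smult smultQ p J \<Longrightarrow> x \<in> J \<longleftrightarrow> p x = 0"
  unfolding quotient_map_def by (auto simp: surj_def) metis

lemma quotient_map_diff: "quotient_map smult smultQ p J \<Longrightarrow> p (x - y) = p x - p y"
  using quotient_map_add[of smult smultQ p J "x - y" y] by (simp add: algebra_simps)

lemma quotient_map_eq_iff: "quotient_map smult smultQ p J \<Longrightarrow> p x = p y \<longleftrightarrow> x - y \<in> J"
  by (simp add: quotient_map_kernel quotient_map_diff)

section \<open>Units lift when R is locally unit-regular\<close>

definition units_lift :: "'a::ring set \<Rightarrow> 'a \<Rightarrow> bool" where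
  "units_lift J e \<longleftrightarrow> (\<forall>x\<in>corner e UNIV.
     (\<exists>y\<in>corner e UNIV. x * y - e \<in> corner e J \<and> y * x - e \<in> corner e J) \<longrightarrow>
     (\<exists>u. is_unit_in (corner e UNIV) e u \<and> u - x \<in> corner e J))"

text \<open>If x is invertible modulo J, any inner inverse u of x is its inverse modulo J, so the
  inverse of a unit inner inverse is a unit congruent to x.\<close>

lemma units_lift_if_unit_regular_corner:
  assumes J: "alg_ideal smult J" and P: "quotient_map smult smultQ p J"
    and ee: "e * e = e" and UR: "unit_regular (corner e UNIV) e"
  shows "units_lift J e"
  unfolding units_lift_def
proof (intro ballI impI)
  fix x assume x: "x \<in> corner e UNIV"
    and "\<exists>y\<in>corner e UNIV. x * y - e \<in> corner e J \<and> y * x - e \<in> corner e J"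
  then obtain y where "x * y - e \<in> J" "y * x - e \<in> J"
    using corner_ideal_iff[OF J ee] by blast
  then have pxy: "p x * p y = p e" "p y * p x = p e"
    using quotient_map_eq_iff[OF P, of "x * y" e] quotient_map_eq_iff[OF P, of "y * x" e]
    by (simp_all add: quotient_map_mult[OF P])
  obtain u where u: "is_unit_in (corner e UNIV) e u" "x * u * x = x" using UR x unfolding unit_regular_def by blast
  then obtain v where v: "u \<in> corner e UNIV" "v \<in> corner e UNIV" "u * v = e" "v * u = e"
    unfolding is_unit_in_def by blast
  have ex: "e * x = x" "x * e = x" and eu: "e * u = u" and ev: "v * e = v"
    using x v corner_UNIV_iff[OF ee] by auto
  have q: "p x * p u * p x = p x" "p e * p u = p u" "p v * p u = p e" "p v * p e = p v" "p e * p x = p x"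
    using u(2) eu v(4) ev ex(1) by (simp_all add: quotient_map_mult[OF P, symmetric])
  have "p u * p x = p y * p x * p u * p x" using pxy(2) q(2) by simp
  also have "\<dots> = p y * (p x * p u * p x)" by (simp only: mult.assoc)
  also have "\<dots> = p e" using pxy(2) q(1) by simp
  finally have "p v = p v * (p u * p x)" using q(4) by simp
  also have "\<dots> = p x" using q(3,5) by (simp add: mult.assoc[symmetric])
  finally have "v - x \<in> J" using quotient_map_eq_iff[OF P] by blast
  moreover have "e * v = v" using v corner_UNIV_iff[OF ee] by auto
  ultimately have "v - x \<in> corner e J"
    using corner_ideal_iff[OF J ee] ev ex by (simp add: algebra_simps)
  moreover have "is_unit_in (corner e UNIV) e v" using v unfolding is_unit_in_def by blast
  ultimately show "\<exists>u. is_unit_in (corner e UNIV) e u \<and> u - x \<in> corner e J" by blast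
qed


section \<open>Regular rings and local units\<close>

text \<open>If a b a \<equiv> a modulo J, then j = a - a b a \<in> J has an inner inverse c, and
  b + c - c a b - b a c + b a c a b is an inner inverse of a.\<close>

lemma regular_extension:
  fixes p :: "'a::ring \<Rightarrow> 'q::ring"
  assumes P: "quotient_map smult smultQ p J" and RJ: "regular J" and RQ: "regular (UNIV :: 'q set)"
  shows "regular (UNIV :: 'a set)"
  unfolding regular_def
proof
  fix a :: 'a
  obtain q where "p a * q * p a = p a" using RQ unfolding regular_def by blast
  moreover obtain b where "p b = q" using quotient_map_surj[OF P] by blast
  ultimately have "a - a * b * a \<in> J"
    by (simp add: quotient_map_kernel[OF P] quotient_map_diff[OF P] quotient_map_mult[OF P])
  then obtain c where c: "(a - a * b * a) * c * (a - a * b * a) = a - a * b * a"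
    using RJ unfolding regular_def by blast
  have "a * (b + c - c * a * b - b * a * c + b * a * c * a * b) * a
      = a * b * a + (a - a * b * a) * c * (a - a * b * a)"
    by (simp add: algebra_simps)
  also have "\<dots> = a" using c by simp
  finally show "\<exists>c\<in>UNIV. a * c * a = a" by blast
qed

lemma regular_corner:
  assumes R: "regular A" and ee: "e * e = e" and sandwich: "\<And>x. x \<in> A \<Longrightarrow> e * x * e \<in> A"
  shows "regular (corner e A)"
  unfolding regular_def
proof
  fix x assume "x \<in> corner e A"
  then have x: "x \<in> A" "e * x = x" "x * e = x" using corner_iff[OF ee sandwich] by auto
  obtain c where c: "c \<in> A" "x * c * x = x" using R x(1) unfolding regular_def by blast
  have "x * (e * c * e) * x = (x * e) * c * (e * x)" by (simp add: mult.assoc)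
  then have "x * (e * c * e) * x = x * c * x" using x(2,3) by simp
  moreover have "e * c * e \<in> corner e A" using c(1) unfolding corner_def by blast
  ultimately show "\<exists>c\<in>corner e A. x * c * x = x" using c(2) by auto
qed

lemma left_unit_extend:
  fixes h :: "'a::ring"
  assumes hh: "h * h = h" and w: "w = m - h * m" and wcw: "w * c * w = w"
  shows "(h + w * c - w * c * h) * (h + w * c - w * c * h) = h + w * c - w * c * h"
    and "(h + w * c - w * c * h) * m = m"
    and "h * z = z \<Longrightarrow> (h + w * c - w * c * h) * z = z"
proof -
  have hw: "h * w = 0" unfolding w by (simp add: algebra_simps hh mult.assoc[symmetric])
  show "(h + w * c - w * c * h) * (h + w * c - w * c * h) = h + w * c - w * c * h"
    using hh hw wcw left_assoc_eq[OF hh] left_assoc_eq[OF hw] left_assoc_eq3[OF wcw]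
    by (simp add: left_assoc_ring_simps)
  have "(h + w * c - w * c * h) * m = h * m + w * c * w" unfolding w by (simp add: algebra_simps)
  then show "(h + w * c - w * c * h) * m = m" using wcw w by simp
  show "(h + w * c - w * c * h) * z = z" if "h * z = z"
    using that left_assoc_eq[OF that] by (simp add: left_assoc_ring_simps)
qed

lemma right_unit_extend:
  fixes k :: "'a::ring"
  assumes kk: "k * k = k" and w: "w = m - m * k" and wcw: "w * c * w = w"
  shows "(k + c * w - k * c * w) * (k + c * w - k * c * w) = k + c * w - k * c * w"
    and "m * (k + c * w - k * c * w) = m"
    and "z * k = z \<Longrightarrow> z * (k + c * w - k * c * w) = z"
proof -
  have wk: "w * k = 0" unfolding w by (simp add: algebra_simps kk mult.assoc)
  show "(k + c * w - k * c * w) * (k + c * w - k * c * w) = k + c * w - k * c * w"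
    using kk wk wcw left_assoc_eq[OF kk] left_assoc_eq[OF wk] left_assoc_eq3[OF wcw]
    by (simp add: left_assoc_ring_simps)
  have "m * (k + c * w - k * c * w) = m * k + w * c * w" unfolding w by (simp add: algebra_simps)
  then show "m * (k + c * w - k * c * w) = m" using wcw w by simp
  show "z * (k + c * w - k * c * w) = z" if "z * k = z"
    using that left_assoc_eq[OF that] by (simp add: left_assoc_ring_simps)
qed

lemma two_sided_unit_of_left_right:
  fixes h :: "'a::ring"
  assumes hh: "h * h = h" and kk: "k * k = k" and hk: "h * k = h"
  shows "(h + k - k * h) * (h + k - k * h) = h + k - k * h"
    and "h * z = z \<Longrightarrow> (h + k - k * h) * z = z"
    and "z * k = z \<Longrightarrow> z * (h + k - k * h) = z"
proof -
  show "(h + k - k * h) * (h + k - k * h) = h + k - k * h"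
    using hh kk hk left_assoc_eq[OF hh] left_assoc_eq[OF kk] left_assoc_eq[OF hk]
    by (simp add: left_assoc_ring_simps)
  show "(h + k - k * h) * z = z" if "h * z = z"
    using that left_assoc_eq[OF that] by (simp add: left_assoc_ring_simps)
  show "z * (h + k - k * h) = z" if "z * k = z"
    using that hh left_assoc_eq[OF that] left_assoc_eq[OF hk] by (simp add: left_assoc_ring_simps)
qed

lemma regular_left_local_unit:
  assumes A: "subrng A" and R: "regular A" and F: "finite F" "F \<subseteq> A"
  shows "\<exists>h\<in>A. h * h = h \<and> (\<forall>x\<in>F. h * x = x)"
  using F
proof (induction F rule: finite_induct)
  case empty
  show ?case using subrng_zero[OF A] by (intro bexI[of _ 0]) auto
next
  case (insert m F)
  then obtain h where h: "h \<in> A" "h * h = h" "\<forall>x\<in>F. h * x = x" by auto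
  define w where "w = m - h * m"
  have wA: "w \<in> A" unfolding w_def using A h(1) insert.prems by (auto intro: subrng_diff subrng_mult)
  obtain c where c: "c \<in> A" "w * c * w = w" using R wA unfolding regular_def by blast
  have "h + w * c - w * c * h \<in> A" using A h(1) wA c(1) by (auto intro!: subrng_add subrng_diff subrng_mult)
  then show ?case using left_unit_extend[OF h(2) w_def c(2)] h(3) by blast
qed

lemma regular_right_local_unit:
  assumes A: "subrng A" and R: "regular A" and F: "finite F" "F \<subseteq> A"
  shows "\<exists>k\<in>A. k * k = k \<and> (\<forall>x\<in>F. x * k = x)"
  using F
proof (induction F rule: finite_induct)
  case empty
  show ?case using subrng_zero[OF A] by (intro bexI[of _ 0]) auto
next
  case (insert m F)
  then obtain k where k: "k \<in> A" "k * k = k" "\<forall>x\<in>F. x * k = x" by auto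
  define w where "w = m - m * k"
  have wA: "w \<in> A" unfolding w_def using A k(1) insert.prems by (auto intro: subrng_diff subrng_mult)
  obtain c where c: "c \<in> A" "w * c * w = w" using R wA unfolding regular_def by blast
  have "k + c * w - k * c * w \<in> A" using A k(1) wA c(1) by (auto intro!: subrng_add subrng_diff subrng_mult)
  then show ?case using right_unit_extend[OF k(2) w_def c(2)] k(3) by blast
qed

lemma regular_local_units:
  assumes A: "subrng A" and R: "regular A" and F: "finite F" "F \<subseteq> A"
  shows "\<exists>g\<in>A. g * g = g \<and> (\<forall>x\<in>F. g * x = x \<and> x * g = x)"
proof -
  obtain h where h: "h \<in> A" "h * h = h" "\<forall>x\<in>F. h * x = x"
    using regular_left_local_unit[OF A R F] by blast
  obtain k where k: "k \<in> A" "k * k = k" "\<forall>x\<in>insert h F. x * k = x"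
    using regular_right_local_unit[OF A R, of "insert h F"] F h(1) by auto
  have "h + k - k * h \<in> A" using A h(1) k(1) by (auto intro!: subrng_add subrng_diff subrng_mult)
  then show ?thesis using two_sided_unit_of_left_right[OF h(2) k(2)] h(3) k(3) by auto
qed

lemma ideal_corner_local_unit:
  assumes K: "k_algebra smult" and J: "alg_ideal smult J" and RJ: "regular J"
    and ff: "f * f = f" and j: "j \<in> J"
  shows "\<exists>k\<in>J. k * k = k \<and> f * k = k \<and> k * f = k \<and> k * (f * j) = f * j \<and> j * f * k = j * f"
proof -
  note sandwich = alg_ideal_sandwich[OF J]
  note mem = corner_ideal_iff[OF J ff]
  obtain c where c: "c \<in> J" "f * j * c * (f * j) = f * j"
    using RJ alg_ideal_mult(1)[OF J j] unfolding regular_def by blast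
  obtain d where d: "d \<in> J" "j * f * d * (j * f) = j * f"
    using RJ alg_ideal_mult(2)[OF J j] unfolding regular_def by blast
  define l where "l = f * j * c * f"
  define r where "r = f * d * j * f"
  have "l \<in> J" "r \<in> J" unfolding l_def r_def using c(1) d(1) j by (auto intro: alg_ideal_mult[OF J])
  moreover have "f * l = l" "f * r = r" unfolding l_def r_def using ff by (simp_all add: mult.assoc[symmetric])
  moreover have "l * f = l" "r * f = r" unfolding l_def r_def using ff by (simp_all add: mult.assoc)
  ultimately have "{l, r} \<subseteq> corner f J" using mem by auto
  then obtain k where k: "k \<in> corner f J" "k * k = k" "k * l = l" "r * k = r"
    using regular_local_units[OF subrng_corner[OF alg_ideal_subrng[OF K J] ff sandwich]
        regular_corner[OF RJ ff sandwich], of "{l, r}"] by auto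
  have "l * (f * j) = f * j"
    unfolding l_def using c(2) by (simp add: mult.assoc[symmetric] left_assoc_eq[OF ff])
  then have "k * (f * j) = k * l * (f * j)" by (simp add: mult.assoc)
  then have "k * (f * j) = f * j" using k(3) \<open>l * (f * j) = f * j\<close> by simp
  moreover have "j * f * r = j * f"
    unfolding r_def using d(2) by (simp add: mult.assoc[symmetric] left_assoc_eq[OF ff])
  then have "j * f * k = j * f * r * k" by simp
  then have "j * f * k = j * f" using k(4) \<open>j * f * r = j * f\<close> by (simp add: mult.assoc)
  ultimately show ?thesis using k(1,2) mem by auto
qed


section \<open>Unit-regular corners from lifted units\<close>

text \<open>The idempotent is h1 + h2 with h1 \<in> fJf and h2 \<in> (g - f)J(g - f) local units for the
  components of j on either side of f and g - f.\<close>

lemma commuting_idempotent_in_ideal: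
  assumes K: "k_algebra smult" and J: "alg_ideal smult J" and RJ: "regular J"
    and gg: "g * g = g" and f: "f * f = f" "g * f = f" "f * g = f"
    and j: "j \<in> J" "g * j = j" "j * g = j"
  shows "\<exists>h\<in>J. h * h = h \<and> h * f = f * h \<and> h * j = j \<and> j * h = j \<and> g * h = h \<and> h * g = h"
proof -
  define f' where "f' = g - f"
  have f': "f' * f' = f'" "f * f' = 0" "f' * f = 0" "g * f' = f'" "f' * g = f'"
    unfolding f'_def using gg f by (simp_all add: algebra_simps)
  obtain h1 where h1: "h1 \<in> J" "h1 * h1 = h1" "f * h1 = h1" "h1 * f = h1"
      "h1 * (f * j) = f * j" "j * f * h1 = j * f"
    using ideal_corner_local_unit[OF K J RJ f(1) j(1)] by blast
  obtain h2 where h2: "h2 \<in> J" "h2 * h2 = h2" "f' * h2 = h2" "h2 * f' = h2"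
      "h2 * (f' * j) = f' * j" "j * f' * h2 = j * f'"
    using ideal_corner_local_unit[OF K J RJ f'(1) j(1)] by blast
  have orth: "h1 * h2 = 0" "h2 * h1 = 0" "h2 * f = 0" "f * h2 = 0"
    using h1(3,4) h2(3,4) f'(2,3) by (metis mult.assoc mult_zero_left mult_zero_right)+
  have "h1 * j = f * j" "h2 * j = f' * j" "j * h1 = j * f" "j * h2 = j * f'"
    using h1(3-6) h2(3-6) by (metis mult.assoc)+
  then have "(h1 + h2) * j = g * j" "j * (h1 + h2) = j * g"
    unfolding f'_def by (simp_all add: algebra_simps)
  moreover have "g * h1 = h1" "h1 * g = h1" "g * h2 = h2" "h2 * g = h2"
    using h1(3,4) h2(3,4) f(2,3) f'(4,5) by (metis mult.assoc)+
  moreover have "h1 + h2 \<in> J" using alg_ideal_subrng[OF K J] h1(1) h2(1) by (rule subrng_add)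
  ultimately show ?thesis
    using h1 h2 orth j by (intro bexI[of _ "h1 + h2"]) (simp_all add: algebra_simps)
qed

lemma unit_inner_inverse_of_orthogonal_sum:
  fixes g :: "'a::ring"
  assumes gg: "g * g = g" and h: "h * h = h" "g * h = h" "h * g = h"
    and y: "y * y = y" "y * h = 0" "h * y = 0" "y * g = y"
    and x: "h * x = x" "x * h = x"
    and w: "w * w' = h" "w' * w = h" "h * w = w" "w * h = w" "h * w' = w'" "w' * h = w'"
    and xwx: "x * w * x = x"
  shows "is_unit_in (corner g UNIV) g (g - h + w)" and "(y + x) * (g - h + w) * (y + x) = y + x"
proof -
  have gw: "g * w = w" "w * g = w" "g * w' = w'" "w' * g = w'"
    using h(2,3) w(3-6) by (metis mult.assoc)+
  have "(g - h + w) * (g - h + w') = g" "(g - h + w') * (g - h + w) = g"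
    using gg h gw w(1,2) w(3-6) by (simp_all add: algebra_simps)
  moreover have "g - h + w \<in> corner g UNIV" "g - h + w' \<in> corner g UNIV"
    using gg h gw by (simp_all add: corner_UNIV_iff algebra_simps)
  ultimately show "is_unit_in (corner g UNIV) g (g - h + w)" unfolding is_unit_in_def by blast
  have "y * w = 0" "w * y = 0" "y * x = 0" "x * g = x"
    using y(2,3) w(3,4) x h(3) by (metis mult.assoc mult_zero_left mult_zero_right)+
  then have "(y + x) * (g - h + w) = y + x * w" using y x by (simp add: algebra_simps)
  then show "(y + x) * (g - h + w) * (y + x) = y + x"
    using y(1) xwx \<open>y * x = 0\<close> \<open>w * y = 0\<close> x(2) y(2)
    by (simp add: algebra_simps)
qed

text \<open>Split b = (f - h f) + h b h: the first summand is an idempotent orthogonal to h, the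
  second lies in the unit-regular corner hJh.\<close>

lemma unit_inner_inverse_of_idempotent_mod_ideal:
  assumes K: "k_algebra smult" and J: "alg_ideal smult J" and LJ: "locally_unit_regular smult J"
    and gg: "g * g = g" and f: "f * f = f" "g * f = f" "f * g = f"
    and b: "g * b = b" "b * g = b" and bf: "b - f \<in> J"
  shows "\<exists>W. is_unit_in (corner g UNIV) g W \<and> b * W * b = b"
proof -
  define j where "j = b - f"
  have j: "j \<in> J" "g * j = j" "j * g = j" unfolding j_def using bf b f by (simp_all add: algebra_simps)
  obtain h where h: "h \<in> J" "h * h = h" "h * f = f * h" "h * j = j" "j * h = j" "g * h = h" "h * g = h"
    using commuting_idempotent_in_ideal[OF K J locally_unit_regular_imp_regular[OF LJ] gg f j] by blast
  define x where "x = h * b * h"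
  define y where "y = f - h * f"
  have "x = h * f * h + h * j * h" unfolding x_def j_def by (simp add: algebra_simps)
  also have "\<dots> = h * f + j" using h(2-5) by (metis mult.assoc)
  finally have b_split: "b = y + x" unfolding y_def j_def by simp
  have y: "y * y = y" "y * h = 0" "h * y = 0" "y * g = y"
    unfolding y_def using f h(2,3) left_assoc_eq[OF h(2)] left_assoc_eq[OF f(1)]
    by (simp_all add: left_assoc_ring_simps) (metis mult.assoc)+
  have hx: "h * x = x" "x * h = x" unfolding x_def using h(2) by (metis mult.assoc)+
  have "x \<in> corner h J" using corner_ideal_iff[OF J h(2)] hx alg_ideal_mult[OF J h(1)] unfolding x_def by auto
  then obtain w where w: "is_unit_in (corner h J) h w" "x * w * x = x"
    using locally_unit_regular_corner[OF K LJ h(1,2) alg_ideal_sandwich[OF J]]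
    unfolding unit_regular_def by blast
  then obtain w' where "w \<in> corner h J" "w' \<in> corner h J" "w * w' = h" "w' * w = h"
    unfolding is_unit_in_def by blast
  then have w': "w * w' = h" "w' * w = h" "h * w = w" "w * h = w" "h * w' = w'" "w' * h = w'"
    using corner_ideal_iff[OF J h(2)] by auto
  show ?thesis
    using unit_inner_inverse_of_orthogonal_sum[OF gg h(2,6,7) y hx w' w(2)] b_split by auto
qed

text \<open>For an inner inverse y of x x, e = x x y is idempotent with p e = p x p y, and the
  correction f = e + e x (g - e) is an idempotent mapping to p x.\<close>

lemma lift_idempotent_in_corner:
  fixes p :: "'a::ring \<Rightarrow> 'q::ring"
  assumes P: "quotient_map smult smultQ p J" and R: "regular (UNIV :: 'a set)"
    and gg: "g * g = g" and x: "g * x = x" "x * g = x" and xx: "p x * p x = p x"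
  shows "\<exists>f. f * f = f \<and> g * f = f \<and> f * g = f \<and> p f = p x"
proof -
  define a where "a = x * x"
  have ga: "g * a = a" "a * g = a" unfolding a_def using x by (metis mult.assoc)+
  obtain y0 where y0: "a * y0 * a = a" using R unfolding regular_def by blast
  define y where "y = g * y0 * g"
  have aya: "a * y * a = a" unfolding y_def using ga y0 by (metis mult.assoc)
  have gy: "y * g = y" "g * y = y" unfolding y_def using gg by (metis mult.assoc)+
  define e where "e = a * y"
  have e: "e * e = e" "g * e = e" "e * g = e" unfolding e_def using aya ga gy by (metis mult.assoc)+
  define n where "n = e * x * (g - e)"
  have n: "e * n = n" "n * e = 0" "g * n = n" "n * g = n"
    unfolding n_def using e gg x
    by (simp_all add: algebra_simps mult.assoc[symmetric] left_assoc_eq[OF e(1)] left_assoc_eq[OF e(3)]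
        left_assoc_eq[OF gg] left_assoc_eq[OF e(2)] del: mult.assoc)
  have "n * n = n * e * x * (g - e)" unfolding n_def by (simp add: mult.assoc)
  then have nn: "n * n = 0" using n by simp
  have "p e * p x = p x" "p x * p e = p e" "p x * p g = p x"
  proof -
    have "p a * p y * p a = p a" using aya by (simp add: quotient_map_mult[OF P, symmetric])
    then have "p x * p y * p x = p x"
      unfolding a_def quotient_map_mult[OF P] using xx left_assoc_eq[OF xx] by (simp add: mult.assoc[symmetric])
    moreover have "p e = p x * p y" unfolding e_def a_def using xx by (simp add: quotient_map_mult[OF P])
    ultimately show "p e * p x = p x" "p x * p e = p e"
      using xx by (simp_all add: mult.assoc[symmetric])
    show "p x * p g = p x" using x(2) by (simp add: quotient_map_mult[OF P, symmetric])
  qed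
  moreover have "p e * p e = p e" using e(1) by (simp add: quotient_map_mult[OF P, symmetric])
  ultimately have "p (e + n) = p x"
    unfolding n_def by (simp add: quotient_map_add[OF P] quotient_map_mult[OF P] quotient_map_diff[OF P] algebra_simps)
  moreover have "(e + n) * (e + n) = e + n" using e n nn by (simp add: algebra_simps)
  moreover have "g * (e + n) = e + n" "(e + n) * g = e + n" using e n by (simp_all add: algebra_simps)
  ultimately show ?thesis by blast
qed

lemma lift_unit_in_corner:
  assumes J: "alg_ideal smult J" and P: "quotient_map smult smultQ p J"
    and gg: "g * g = g" and H: "units_lift J g"
    and UV: "U * V = p g" "V * U = p g" "p g * U = U" "U * p g = U" "p g * V = V" "V * p g = V"
  shows "\<exists>u. is_unit_in (corner g UNIV) g u \<and> p u = U"
proof -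
  obtain u0 v0 where "p u0 = U" "p v0 = V" using quotient_map_surj[OF P] by metis
  define u1 where "u1 = g * u0 * g"
  define v1 where "v1 = g * v0 * g"
  have pu: "p u1 = U" "p v1 = V"
    unfolding u1_def v1_def using \<open>p u0 = U\<close> \<open>p v0 = V\<close> UV by (simp_all add: quotient_map_mult[OF P])
  have g: "g * u1 = u1" "u1 * g = u1" "g * v1 = v1" "v1 * g = v1"
    unfolding u1_def v1_def using gg by (simp_all add: mult.assoc) (simp_all add: mult.assoc[symmetric])
  then have c: "u1 \<in> corner g UNIV" "v1 \<in> corner g UNIV" using corner_UNIV_iff[OF gg] by auto
  have "u1 * v1 - g \<in> J" "v1 * u1 - g \<in> J"
    using pu UV(1,2) by (simp_all add: quotient_map_eq_iff[OF P, symmetric] quotient_map_mult[OF P])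
  moreover have "g * (u1 * v1 - g) = u1 * v1 - g" "(u1 * v1 - g) * g = u1 * v1 - g"
    "g * (v1 * u1 - g) = v1 * u1 - g" "(v1 * u1 - g) * g = v1 * u1 - g"
    using g gg by (simp_all add: algebra_simps mult.assoc[symmetric])
  ultimately have "u1 * v1 - g \<in> corner g J" "v1 * u1 - g \<in> corner g J"
    using corner_ideal_iff[OF J gg] by auto
  then obtain u where "is_unit_in (corner g UNIV) g u" "u - u1 \<in> corner g J"
    using H c unfolding units_lift_def by blast
  moreover then have "p u = U" using pu corner_ideal_iff[OF J gg] quotient_map_eq_iff[OF P] by metis
  ultimately show ?thesis by blast
qed


lemma unit_regular_corner_if_units_lift:
  fixes smult :: "'k::field \<Rightarrow> 'a::ring \<Rightarrow> 'a" and smultQ :: "'k \<Rightarrow> 'q::ring \<Rightarrow> 'q"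
    and p :: "'a \<Rightarrow> 'q"
  assumes K: "k_algebra smult" and KQ: "k_algebra smultQ" and J: "alg_ideal smult J"
    and P: "quotient_map smult smultQ p J"
    and LJ: "locally_unit_regular smult J" and LQ: "locally_unit_regular smultQ (UNIV :: 'q set)"
    and R: "regular (UNIV :: 'a set)" and gg: "g * g = g" and H: "units_lift J g"
  shows "unit_regular (corner g UNIV) g"
  unfolding unit_regular_def
proof
  fix a assume "a \<in> corner g UNIV"
  then have ga: "g * a = a" "a * g = a" using corner_UNIV_iff[OF gg] by auto
  note hom = quotient_map_mult[OF P, symmetric]
  have pgg: "p g * p g = p g" using gg by (simp add: hom)
  have "p a \<in> corner (p g) UNIV" using ga corner_UNIV_iff[OF pgg] by (simp add: hom)
  then obtain U where U: "is_unit_in (corner (p g) UNIV) (p g) U" "p a * U * p a = p a"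
    using locally_unit_regular_corner[OF KQ LQ _ pgg] unfolding unit_regular_def by blast
  then obtain V where "U \<in> corner (p g) UNIV" "V \<in> corner (p g) UNIV" "U * V = p g" "V * U = p g"
    unfolding is_unit_in_def by blast
  then obtain u where u: "is_unit_in (corner g UNIV) g u" "p u = U"
    using lift_unit_in_corner[OF J P gg H] corner_UNIV_iff[OF pgg] by blast
  then obtain u' where u': "u \<in> corner g UNIV" "u' \<in> corner g UNIV" "u * u' = g" "u' * u = g"
    unfolding is_unit_in_def by blast
  have gu: "g * u = u" "u * g = u" using u'(1) corner_UNIV_iff[OF gg] by auto
  define b where "b = a * u"
  have gb: "g * b = b" "b * g = b" unfolding b_def using ga gu by (metis mult.assoc)+
  have "p b * p b = p b" unfolding b_def using U(2) u(2) by (simp add: hom[symmetric] mult.assoc[symmetric])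
  then obtain f where f: "f * f = f" "g * f = f" "f * g = f" "p f = p b"
    using lift_idempotent_in_corner[OF P R gg gb] by blast
  have "b - f \<in> J" using f(4) quotient_map_eq_iff[OF P] by metis
  then obtain W where W: "is_unit_in (corner g UNIV) g W" "b * W * b = b"
    using unit_inner_inverse_of_idempotent_mod_ideal[OF K J LJ gg f(1-3) gb] by blast
  have "a = b * u'" unfolding b_def using u'(3) ga by (simp add: mult.assoc)
  then have "a * (u * W) * a = a" using W(2) unfolding b_def by (metis mult.assoc)
  moreover have "is_unit_in (corner g UNIV) g (u * W)"
    using is_unit_in_mult[OF subrng_corner[OF subrng_UNIV gg] is_identity_corner[OF gg] u(1) W(1)] by simp
  ultimately show "\<exists>u. is_unit_in (corner g UNIV) g u \<and> a * u * a = a" by blast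
qed

lemma locally_unit_regular_if_units_lift:
  fixes smult :: "'k::field \<Rightarrow> 'a::ring \<Rightarrow> 'a" and smultQ :: "'k \<Rightarrow> 'q::ring \<Rightarrow> 'q"
    and p :: "'a \<Rightarrow> 'q"
  assumes K: "k_algebra smult" and KQ: "k_algebra smultQ" and J: "alg_ideal smult J"
    and P: "quotient_map smult smultQ p J"
    and LJ: "locally_unit_regular smult J" and LQ: "locally_unit_regular smultQ (UNIV :: 'q set)"
    and H: "\<forall>e. e * e = e \<longrightarrow> units_lift J e"
  shows "locally_unit_regular smult (UNIV :: 'a set)"
  unfolding locally_unit_regular_def
proof (intro allI impI)
  fix F :: "'a set" assume F: "finite F \<and> F \<subseteq> UNIV"
  have R: "regular (UNIV :: 'a set)"
    using regular_extension[OF P locally_unit_regular_imp_regular[OF LJ] locally_unit_regular_imp_regular[OF LQ]] .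
  obtain g where g: "g * g = g" "\<forall>x\<in>F. g * x = x \<and> x * g = x"
    using regular_local_units[OF subrng_UNIV R] F by blast
  have "subalgebra smult (corner g UNIV)" using subalgebra_corner[OF K subalgebra_UNIV[OF K] _ g(1)] by simp
  moreover have "unit_regular_with_identity (corner g UNIV)"
    using is_identity_corner[OF g(1)] unit_regular_corner_if_units_lift[OF assms(1-6) R g(1)] H g(1)
    unfolding unit_regular_with_identity_iff by blast
  moreover have "F \<subseteq> corner g UNIV" using g corner_UNIV_iff[OF g(1)] by auto
  ultimately show "\<exists>S. subalgebra smult S \<and> S \<subseteq> UNIV \<and> F \<subseteq> S \<and> unit_regular_with_identity S"
    by blast
qed

theorem proposition5p3:
  fixes smult :: "'k::field \<Rightarrow> 'a::ring \<Rightarrow> 'a"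
    and smultQ :: "'k \<Rightarrow> 'q::ring \<Rightarrow> 'q"
    and p :: "'a \<Rightarrow> 'q"
    and J :: "'a set"
  assumes "k_algebra smult"
    and "k_algebra smultQ"
    and "alg_ideal smult J"
    and "quotient_map smult smultQ p J"
    and "locally_unit_regular smult J"
    and "locally_unit_regular smultQ (UNIV :: 'q set)"
  shows "locally_unit_regular smult (UNIV :: 'a set) \<longleftrightarrow>
    (\<forall>e. e * e = e \<longrightarrow>
       (\<forall>x\<in>corner e UNIV.
          (\<exists>y\<in>corner e UNIV. x * y - e \<in> corner e J \<and> y * x - e \<in> corner e J) \<longrightarrow>
          (\<exists>u. is_unit_in (corner e UNIV) e u \<and> u - x \<in> corner e J)))"
proof -
  have "locally_unit_regular smult (UNIV :: 'a set) \<longleftrightarrow> (\<forall>e. e * e = e \<longrightarrow> units_lift J e)"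
  proof
    assume "locally_unit_regular smult (UNIV :: 'a set)"
    then show "\<forall>e. e * e = e \<longrightarrow> units_lift J e"
      using units_lift_if_unit_regular_corner[OF assms(3,4)] locally_unit_regular_corner[OF assms(1)]
      by blast
  next
    assume "\<forall>e. e * e = e \<longrightarrow> units_lift J e"
    then show "locally_unit_regular smult (UNIV :: 'a set)"
      by (rule locally_unit_regular_if_units_lift[OF assms])
  qed
  then show ?thesis unfolding units_lift_def .
qed

end
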